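(* Let $(T,\eta,(-)^\#,\sqsubseteq,\Uparrow)$ be a while-monad on $\mathbf{Set}$, $(\Omega,\le)$ a complete lattice, $o:T\Omega\to\Omega$ a meet-preserving Eilenberg–Moore $T$-algebra, $P$ a while program and $b$ a condition. Define $\Phi:\mathbf{Set}_T(\mathbb M,\mathbb M)\to\mathbf{Set}_T(\mathbb M,\mathbb M)$ by $\Phi(f)=\lambda\rho.$ if $\llbracket b\rrbracket\rho=\mathrm{tt}$ then $(f\bullet\llbracket P\rrbracket_T)(\rho)$ else $\eta_{\mathbb M}(\rho)$, and $\Psi$ on join-preserving maps $g:\mathcal P_\Omega(\mathbb M)\to\mathcal P_\Omega(\mathbb M)$ by $\Psi(g)=\lambda\phi.\ g(\llbracket P\rrbracket^c(\phi\wedge_{\mathbb M}\mathrm{grd}_b^{\mathrm{tt}}))\vee_{\mathbb M}(\phi\wedge_{\mathbb M}\mathrm{grd}_b^{\mathrm{ff}})$. Then $\Psi$ maps join-preserving maps to join-preserving maps, and $\Psi\circ sp^o=sp^o\circ\Phi$, i.e. $\Psi(sp^o(f))=sp^o(\Phi(f))$ for every $f\in\mathbf{Set}_T(\mathbb M,\mathbb M)$.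
   Context: Fix a set of values $\mathbb V$, a finite set of variables $X$, and memories $\mathbb M=\mathbb V^X$. Programs: $P::=\mathtt{skip}\mid P;P\mid x:=e\mid \mathtt{if}\ b\ \{P\}\ \mathtt{else}\ \{P\}\mid \mathtt{while}\ b\ \{P\}$. Each condition $b$ has a given interpretation $\llbracket b\rrbracket:\mathbb M\to\{\mathrm{ff},\mathrm{tt}\}$. A while-monad on $\mathbf{Set}$ is a monad $(T,\eta,(-)^\#)$ on $\mathbf{Set}$ together with an $\omega$-cpo structure $(\sqsubseteq_X,\Uparrow_X)$ on each $TX$, such that, with $\sqsubseteq_{X,Y}$ the pointwise order on Kleisli maps $\mathbf{Set}_T(X,Y)=\mathbf{Set}(X,TY)$ and $\Uparrow_{X,Y}=\lambda x.\Uparrow_Y$: Kleisli composition $g\bullet f=g^\#\circ f$ is monotone and $\omega$-continuous in each argument, and $f\bullet\Uparrow_{X,Y}=\Uparrow_{X,Z}$. Monadic semantics: each assignment has a given $\llbracket x:=e\rrbracket\in\mathbf{Set}_T(\mathbb M,\mathbb M)$, and $\llbracket\mathtt{skip}\rrbracket_T=\eta_{\mathbb M}$, $\llbracket P;P'\rrbracket_T=\llbracket P'\rrbracket_T\bullet\llbracket P\rrbracket_T$, $\llbracket x:=e\rrbracket_T=\llbracket x:=e\rrbracket$, $\llbracket\mathtt{if}\ b\ \{P_1\}\ \mathtt{else}\ \{P_2\}\rrbracket_T=\lambda\rho.$ if $\llbracket b\rrbracket\rho=\mathrm{tt}$ then $\llbracket P_1\rrbracket_T(\rho)$ else $\llbracket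 P_2\rrbracket_T(\rho)$, and $\llbracket\mathtt{while}\ b\ \{P\}\rrbracket_T$ is the least fixpoint of the map $\Phi$ above. $\mathcal P_\Omega(Y)=(\mathbf{Set}(Y,\Omega),\le_Y)$ with pointwise order and lattice operations $\wedge_Y,\vee_Y,\bot_Y,\top_Y$. An Eilenberg–Moore algebra $o$ is meet-preserving if each $\phi\mapsto o\circ T\phi:\mathcal P_\Omega(Y)\to\mathcal P_\Omega(TY)$ preserves arbitrary meets. For $f\in\mathbf{Set}_T(Y,Z)$, $wp^o(f)(\phi)=o\circ T\phi\circ f$ and $sp^o(f)$ is the left adjoint of $wp^o(f)$. $\llbracket P\rrbracket^c=sp^o(\llbracket P\rrbracket_T)$. $\mathrm{grd}_b^v(\rho)=\top$ if $\llbracket b\rrbracket\rho=v$, else $\bot$. *)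

theory Defs
  imports Main
begin

(* 'x variables, 'e expressions (for assignments), 'c conditions *)
datatype ('x, 'e, 'c) prog =
    Skip
  | Seq "('x, 'e, 'c) prog" "('x, 'e, 'c) prog"
  | Assign 'x 'e
  | If 'c "('x, 'e, 'c) prog" "('x, 'e, 'c) prog"
  | While 'c "('x, 'e, 'c) prog"

type_synonym ('x, 'v) mem = "'x \<Rightarrow> 'v"

definition is_chain :: "('a \<Rightarrow> 'a \<Rightarrow> bool) \<Rightarrow> (nat \<Rightarrow> 'a) \<Rightarrow> bool" where
  "is_chain le c \<longleftrightarrow> (\<forall>n. le (c n) (c (Suc n)))"

definition is_lub :: "('a \<Rightarrow> 'a \<Rightarrow> bool) \<Rightarrow> (nat \<Rightarrow> 'a) \<Rightarrow> 'a \<Rightarrow> bool" where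
  "is_lub le c x \<longleftrightarrow> (\<forall>n. le (c n) x) \<and> (\<forall>y. (\<forall>n. le (c n) y) \<longrightarrow> le x y)"

text \<open>An omega-cpo with least element bot (the paper's Uparrow).\<close>
definition omega_cpo :: "('a \<Rightarrow> 'a \<Rightarrow> bool) \<Rightarrow> 'a \<Rightarrow> bool" where
  "omega_cpo le bt \<longleftrightarrow>
     (\<forall>x. le x x) \<and> (\<forall>x y z. le x y \<longrightarrow> le y z \<longrightarrow> le x z) \<and>
     (\<forall>x y. le x y \<longrightarrow> le y x \<longrightarrow> x = y) \<and> (\<forall>x. le bt x) \<and>
     (\<forall>c. is_chain le c \<longrightarrow> (\<exists>x. is_lub le c x))"

definition kle :: "('b \<Rightarrow> 'b \<Rightarrow> bool) \<Rightarrow> ('a \<Rightarrow> 'b) \<Rightarrow> ('a \<Rightarrow> 'b) \<Rightarrow> bool" where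
  "kle le f g \<longleftrightarrow> (\<forall>x. le (f x) (g x))"

text \<open>Kleisli composition g \<bullet> f = bind g \<circ> f is monotone and omega-continuous in each
  argument and strict (g \<bullet> Uparrow = Uparrow).  Since composition is computed pointwise in
  the source object X, it suffices (and is equivalent) to state this for bind itself.\<close>
definition kleisli_ok ::
  "('tb \<Rightarrow> 'tb \<Rightarrow> bool) \<Rightarrow> 'tb \<Rightarrow> ('tc \<Rightarrow> 'tc \<Rightarrow> bool) \<Rightarrow> 'tc \<Rightarrow>
   (('b \<Rightarrow> 'tc) \<Rightarrow> 'tb \<Rightarrow> 'tc) \<Rightarrow> bool" where
  "kleisli_ok leB botB leC botC bind \<longleftrightarrow>
     (\<forall>g t t'. leB t t' \<longrightarrow> leC (bind g t) (bind g t')) \<and>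
     (\<forall>g g' t. kle leC g g' \<longrightarrow> leC (bind g t) (bind g' t)) \<and>
     (\<forall>g c t. is_chain leB c \<longrightarrow> is_lub leB c t \<longrightarrow> is_lub leC (\<lambda>n. bind g (c n)) (bind g t)) \<and>
     (\<forall>gs g t. is_chain (kle leC) gs \<longrightarrow> (\<forall>y. is_lub leC (\<lambda>n. gs n y) (g y)) \<longrightarrow>
          is_lub leC (\<lambda>n. bind (gs n) t) (bind g t)) \<and>
     (\<forall>g. bind g botB = botC)"

text \<open>T M is represented by type 'tm, T Omega by type 'to; etaM, etaO are the units and
  bAB :: (A => T B) => T A => T B the Kleisli extensions (-)^#.\<close>
definition while_monad ::
  "('m \<Rightarrow> 'tm) \<Rightarrow> ('o \<Rightarrow> 'to) \<Rightarrow>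
   (('m \<Rightarrow> 'tm) \<Rightarrow> 'tm \<Rightarrow> 'tm) \<Rightarrow> (('m \<Rightarrow> 'to) \<Rightarrow> 'tm \<Rightarrow> 'to) \<Rightarrow>
   (('o \<Rightarrow> 'tm) \<Rightarrow> 'to \<Rightarrow> 'tm) \<Rightarrow> (('o \<Rightarrow> 'to) \<Rightarrow> 'to \<Rightarrow> 'to) \<Rightarrow>
   ('tm \<Rightarrow> 'tm \<Rightarrow> bool) \<Rightarrow> 'tm \<Rightarrow> ('to \<Rightarrow> 'to \<Rightarrow> bool) \<Rightarrow> 'to \<Rightarrow> bool" where
  "while_monad etaM etaO bMM bMO bOM bOO leM botM leO botO \<longleftrightarrow>
     \<comment> \<open>left unit: f^# \<circ> eta = f\<close>
     (\<forall>f x. bMM f (etaM x) = f x) \<and> (\<forall>f x. bMO f (etaM x) = f x) \<and>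
     (\<forall>f x. bOM f (etaO x) = f x) \<and> (\<forall>f x. bOO f (etaO x) = f x) \<and>
     \<comment> \<open>right unit: eta^# = id\<close>
     (\<forall>t. bMM etaM t = t) \<and> (\<forall>t. bOO etaO t = t) \<and>
     \<comment> \<open>associativity: g^# \<circ> f^# = (g^# \<circ> f)^#\<close>
     (\<forall>f g t. bMM g (bMM f t) = bMM (\<lambda>x. bMM g (f x)) t) \<and>
     (\<forall>f g t. bMO g (bMM f t) = bMO (\<lambda>x. bMO g (f x)) t) \<and>
     (\<forall>f g t. bOM g (bMO f t) = bMM (\<lambda>x. bOM g (f x)) t) \<and>
     (\<forall>f g t. bOO g (bMO f t) = bMO (\<lambda>x. bOO g (f x)) t) \<and>
     (\<forall>f g t. bMM g (bOM f t) = bOM (\<lambda>x. bMM g (f x)) t) \<and>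
     (\<forall>f g t. bMO g (bOM f t) = bOO (\<lambda>x. bMO g (f x)) t) \<and>
     (\<forall>f g t. bOM g (bOO f t) = bOM (\<lambda>x. bOM g (f x)) t) \<and>
     (\<forall>f g t. bOO g (bOO f t) = bOO (\<lambda>x. bOO g (f x)) t) \<and>
     \<comment> \<open>omega-cpo structures on T M and T Omega\<close>
     omega_cpo leM botM \<and> omega_cpo leO botO \<and>
     \<comment> \<open>Kleisli composition monotone, omega-continuous, strict\<close>
     kleisli_ok leM botM leM botM bMM \<and> kleisli_ok leM botM leO botO bMO \<and>
     kleisli_ok leO botO leM botM bOM \<and> kleisli_ok leO botO leO botO bOO"

definition Tmap :: "('o \<Rightarrow> 'to) \<Rightarrow> (('a \<Rightarrow> 'to) \<Rightarrow> 'ta \<Rightarrow> 'to) \<Rightarrow> ('a \<Rightarrow> 'o) \<Rightarrow> 'ta \<Rightarrow> 'to" where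
  "Tmap etaO bAO phi = bAO (\<lambda>y. etaO (phi y))"

text \<open>Eilenberg-Moore algebra o : T Omega -> Omega, in Kleisli form:
  o \<circ> eta = id and o \<circ> f^# = o \<circ> T(o \<circ> f) (equivalent to o \<circ> mu = o \<circ> T o).\<close>
definition em_algebra ::
  "('o \<Rightarrow> 'to) \<Rightarrow> (('m \<Rightarrow> 'to) \<Rightarrow> 'tm \<Rightarrow> 'to) \<Rightarrow> (('o \<Rightarrow> 'to) \<Rightarrow> 'to \<Rightarrow> 'to) \<Rightarrow> ('to \<Rightarrow> 'o) \<Rightarrow> bool" where
  "em_algebra etaO bMO bOO alg \<longleftrightarrow>
     (\<forall>w. alg (etaO w) = w) \<and>
     (\<forall>f t. alg (bMO f t) = alg (Tmap etaO bMO (\<lambda>x. alg (f x)) t)) \<and>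
     (\<forall>f t. alg (bOO f t) = alg (Tmap etaO bOO (\<lambda>x. alg (f x)) t))"

definition meet_pres_at :: "('to \<Rightarrow> 'o::complete_lattice) \<Rightarrow> (('a \<Rightarrow> 'o) \<Rightarrow> 'ta \<Rightarrow> 'to) \<Rightarrow> bool" where
  "meet_pres_at alg T \<longleftrightarrow> (\<forall>S. (\<lambda>t. alg (T (Inf S) t)) = Inf ((\<lambda>phi. (\<lambda>t. alg (T phi t))) ` S))"

definition meet_preserving ::
  "('o::complete_lattice \<Rightarrow> 'to) \<Rightarrow> (('m \<Rightarrow> 'to) \<Rightarrow> 'tm \<Rightarrow> 'to) \<Rightarrow> (('o \<Rightarrow> 'to) \<Rightarrow> 'to \<Rightarrow> 'to) \<Rightarrow> ('to \<Rightarrow> 'o) \<Rightarrow> bool" where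
  "meet_preserving etaO bMO bOO alg \<longleftrightarrow>
     meet_pres_at alg (Tmap etaO bMO) \<and> meet_pres_at alg (Tmap etaO bOO)"

definition kleisli_lfp :: "('tm \<Rightarrow> 'tm \<Rightarrow> bool) \<Rightarrow> (('m \<Rightarrow> 'tm) \<Rightarrow> ('m \<Rightarrow> 'tm)) \<Rightarrow> 'm \<Rightarrow> 'tm" where
  "kleisli_lfp leM F = (THE f. F f = f \<and> (\<forall>g. F g = g \<longrightarrow> kle leM f g))"

definition PhiW :: "(('x,'v) mem \<Rightarrow> 'tm) \<Rightarrow> ((('x,'v) mem \<Rightarrow> 'tm) \<Rightarrow> 'tm \<Rightarrow> 'tm) \<Rightarrow>
    (('x,'v) mem \<Rightarrow> bool) \<Rightarrow> (('x,'v) mem \<Rightarrow> 'tm) \<Rightarrow> (('x,'v) mem \<Rightarrow> 'tm) \<Rightarrow> (('x,'v) mem \<Rightarrow> 'tm)" where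
  "PhiW etaM bMM bsem Psem f = (\<lambda>rho. if bsem rho then bMM f (Psem rho) else etaM rho)"

text \<open>asg x e is the given Kleisli map [[x := e]]; cnd b is [[b]] (True = tt, False = ff).\<close>
primrec sem :: "(('x,'v) mem \<Rightarrow> 'tm) \<Rightarrow> ((('x,'v) mem \<Rightarrow> 'tm) \<Rightarrow> 'tm \<Rightarrow> 'tm) \<Rightarrow> ('tm \<Rightarrow> 'tm \<Rightarrow> bool) \<Rightarrow>
    ('x \<Rightarrow> 'e \<Rightarrow> ('x,'v) mem \<Rightarrow> 'tm) \<Rightarrow> ('c \<Rightarrow> ('x,'v) mem \<Rightarrow> bool) \<Rightarrow>
    ('x, 'e, 'c) prog \<Rightarrow> ('x,'v) mem \<Rightarrow> 'tm" where
  "sem etaM bMM leM asg cnd Skip = etaM"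
| "sem etaM bMM leM asg cnd (Seq P Q) =
     (\<lambda>rho. bMM (sem etaM bMM leM asg cnd Q) (sem etaM bMM leM asg cnd P rho))"
| "sem etaM bMM leM asg cnd (Assign x e) = asg x e"
| "sem etaM bMM leM asg cnd (If b P Q) =
     (\<lambda>rho. if cnd b rho then sem etaM bMM leM asg cnd P rho else sem etaM bMM leM asg cnd Q rho)"
| "sem etaM bMM leM asg cnd (While b P) =
     kleisli_lfp leM (PhiW etaM bMM (cnd b) (sem etaM bMM leM asg cnd P))"

definition wp :: "('o \<Rightarrow> 'to) \<Rightarrow> (('m \<Rightarrow> 'to) \<Rightarrow> 'tm \<Rightarrow> 'to) \<Rightarrow> ('to \<Rightarrow> 'o) \<Rightarrow>
    ('y \<Rightarrow> 'tm) \<Rightarrow> ('m \<Rightarrow> 'o) \<Rightarrow> ('y \<Rightarrow> 'o)" where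
  "wp etaO bMO alg f phi = (\<lambda>y. alg (Tmap etaO bMO phi (f y)))"

definition sp :: "('o \<Rightarrow> 'to) \<Rightarrow> (('m \<Rightarrow> 'to) \<Rightarrow> 'tm \<Rightarrow> 'to) \<Rightarrow> ('to \<Rightarrow> 'o::complete_lattice) \<Rightarrow>
    ('y \<Rightarrow> 'tm) \<Rightarrow> ('y \<Rightarrow> 'o) \<Rightarrow> ('m \<Rightarrow> 'o)" where
  "sp etaO bMO alg f = (THE h. \<forall>phi psi. h phi \<le> psi \<longleftrightarrow> phi \<le> wp etaO bMO alg f psi)"

definition grd :: "('m \<Rightarrow> bool) \<Rightarrow> bool \<Rightarrow> 'm \<Rightarrow> 'o::complete_lattice" where
  "grd bsem v = (\<lambda>rho. if bsem rho = v then top else bot)"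

definition join_preserving :: "(('m \<Rightarrow> 'o::complete_lattice) \<Rightarrow> ('m \<Rightarrow> 'o)) \<Rightarrow> bool" where
  "join_preserving g \<longleftrightarrow> (\<forall>S. g (Sup S) = Sup (g ` S))"

end

theory Submission
  imports Defs
begin

text \<open>Meet preservation makes wp(f) an Inf-preserving map, so its left adjoint sp(f) exists and
  is characterised by the Galois connection. Because o is an Eilenberg-Moore algebra, wp turns
  Kleisli composition into composition and the unit into the identity; hence
  wp(Phi f) psi = (if b then wp(P) (wp(f) psi) else psi) pointwise. Splitting a precondition
  phi along the guards shows that Psi(sp f) is left adjoint to exactly this map, so it equals
  sp(Phi f) by uniqueness of adjoints. Join preservation of Psi g follows because left adjoints
  preserve joins and meeting with a guard distributes over joins.\<close>

lemma left_adjoint_unique: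
  fixes h h' :: "'a::order \<Rightarrow> 'b::order"
  assumes "\<And>phi psi. h phi \<le> psi \<longleftrightarrow> phi \<le> W psi"
    and "\<And>phi psi. h' phi \<le> psi \<longleftrightarrow> phi \<le> W psi"
  shows "h = h'"
proof
  fix phi
  show "h phi = h' phi"
    by (rule antisym) (use assms in blast)+
qed

lemma Inf_preserving_left_adjoint:
  fixes W :: "'a::complete_lattice \<Rightarrow> 'b::complete_lattice"
  assumes W_Inf: "\<And>S. W (Inf S) = Inf (W ` S)"
  shows "Inf {psi. phi \<le> W psi} \<le> psi \<longleftrightarrow> phi \<le> W psi"
proof
  have W_mono: "W a \<le> W c" if "a \<le> c" for a c
    using W_Inf[of "{a, c}"] that by (simp add: inf_absorb1 le_iff_inf)
  have "phi \<le> W (Inf {psi. phi \<le> W psi})"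
    using W_Inf by (auto intro: Inf_greatest)
  moreover assume "Inf {psi. phi \<le> W psi} \<le> psi"
  ultimately show "phi \<le> W psi"
    using W_mono order_trans by blast
next
  assume "phi \<le> W psi"
  then show "Inf {psi. phi \<le> W psi} \<le> psi"
    by (auto intro: Inf_lower)
qed

lemma left_adjoint_Sup:
  fixes h :: "'a::complete_lattice \<Rightarrow> 'b::complete_lattice"
  assumes adj: "\<And>phi psi. h phi \<le> psi \<longleftrightarrow> phi \<le> W psi"
  shows "h (Sup S) = Sup (h ` S)"
proof (rule antisym)
  have "Sup S \<le> W (Sup (h ` S))"
    using adj by (metis SUP_upper Sup_least)
  then show "h (Sup S) \<le> Sup (h ` S)"
    using adj by blast
  have "h s \<le> h (Sup S)" if "s \<in> S" for s
    using adj that by (metis Sup_upper order_refl order_trans)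
  then show "Sup (h ` S) \<le> h (Sup S)"
    by (simp add: SUP_least)
qed

lemma wp_Inf:
  assumes "meet_pres_at alg (Tmap etaO bMO)"
  shows "wp etaO bMO alg f (Inf S) = Inf (wp etaO bMO alg f ` S)"
proof
  fix y
  have "(\<lambda>t. alg (Tmap etaO bMO (Inf S) t)) = Inf ((\<lambda>phi t. alg (Tmap etaO bMO phi t)) ` S)"
    using assms unfolding meet_pres_at_def by blast
  from fun_cong[OF this, of "f y"]
  show "wp etaO bMO alg f (Inf S) y = Inf (wp etaO bMO alg f ` S) y"
    unfolding wp_def by (simp add: image_image)
qed

lemma sp_le_iff:
  assumes "meet_pres_at alg (Tmap etaO bMO)"
  shows "sp etaO bMO alg f phi \<le> psi \<longleftrightarrow> phi \<le> wp etaO bMO alg f psi"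
proof -
  let ?h = "\<lambda>phi. Inf {psi. phi \<le> wp etaO bMO alg f psi}"
  have adj: "?h phi \<le> psi \<longleftrightarrow> phi \<le> wp etaO bMO alg f psi" for phi psi
    by (rule Inf_preserving_left_adjoint) (rule wp_Inf[OF assms])
  have "sp etaO bMO alg f = ?h"
    unfolding sp_def
  proof (rule the_equality)
    fix h assume "\<forall>phi psi. h phi \<le> psi \<longleftrightarrow> phi \<le> wp etaO bMO alg f psi"
    then show "h = ?h"
      using adj by (intro left_adjoint_unique) blast+
  qed (use adj in blast)
  then show ?thesis
    using adj by simp
qed

lemma sp_eqI:
  assumes "meet_pres_at alg (Tmap etaO bMO)"
    and "\<And>phi psi. h phi \<le> psi \<longleftrightarrow> phi \<le> wp etaO bMO alg f psi"
  shows "sp etaO bMO alg f = h"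
  using left_adjoint_unique[OF sp_le_iff[OF assms(1)] assms(2)] .

lemma sp_Sup:
  assumes "meet_pres_at alg (Tmap etaO bMO)"
  shows "sp etaO bMO alg f (Sup S) = Sup (sp etaO bMO alg f ` S)"
  using left_adjoint_Sup sp_le_iff[OF assms] by blast

lemma wp_unit:
  assumes "while_monad etaM etaO bMM bMO bOM bOO leM botM leO botO"
    and "em_algebra etaO bMO bOO alg"
  shows "wp etaO bMO alg etaM psi = psi"
proof -
  have "\<forall>f x. bMO f (etaM x) = f x"
    using assms(1) unfolding while_monad_def by (elim conjE) assumption
  moreover have "\<forall>w. alg (etaO w) = w"
    using assms(2) unfolding em_algebra_def by (elim conjE) assumption
  ultimately show ?thesis
    unfolding wp_def Tmap_def by simp
qed

lemma wp_kleisli_comp: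
  assumes "while_monad etaM etaO bMM bMO bOM bOO leM botM leO botO"
    and "em_algebra etaO bMO bOO alg"
  shows "wp etaO bMO alg (\<lambda>rho. bMM f (g rho)) psi
           = wp etaO bMO alg g (wp etaO bMO alg f psi)"
proof
  fix rho
  have assoc: "\<forall>f k t. bMO k (bMM f t) = bMO (\<lambda>x. bMO k (f x)) t"
    using assms(1) unfolding while_monad_def by (elim conjE) assumption
  have em: "\<forall>k t. alg (bMO k t) = alg (Tmap etaO bMO (\<lambda>x. alg (k x)) t)"
    using assms(2) unfolding em_algebra_def by (elim conjE) assumption
  have "alg (bMO (\<lambda>y. etaO (psi y)) (bMM f (g rho)))
      = alg (bMO (\<lambda>x. bMO (\<lambda>y. etaO (psi y)) (f x)) (g rho))"
    using assoc by simp
  also have "\<dots> = alg (Tmap etaO bMO (\<lambda>x. alg (bMO (\<lambda>y. etaO (psi y)) (f x))) (g rho))"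
    using em by blast
  finally show "wp etaO bMO alg (\<lambda>rho. bMM f (g rho)) psi rho
      = wp etaO bMO alg g (wp etaO bMO alg f psi) rho"
    unfolding wp_def Tmap_def .
qed

lemma wp_if:
  "wp etaO bMO alg (\<lambda>rho. if c rho then f rho else g rho) psi
     = (\<lambda>rho. if c rho then wp etaO bMO alg f psi rho else wp etaO bMO alg g psi rho)"
  unfolding wp_def by auto

lemma wp_PhiW:
  assumes "while_monad etaM etaO bMM bMO bOM bOO leM botM leO botO"
    and "em_algebra etaO bMO bOO alg"
  shows "wp etaO bMO alg (PhiW etaM bMM c Psem f) psi
           = (\<lambda>rho. if c rho then wp etaO bMO alg Psem (wp etaO bMO alg f psi) rho else psi rho)"
  unfolding PhiW_def wp_if wp_kleisli_comp[OF assms] wp_unit[OF assms] ..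

lemma inf_grd_Sup:
  "inf (Sup S) (grd c v :: 'm \<Rightarrow> 'o::complete_lattice) = Sup ((\<lambda>phi. inf phi (grd c v)) ` S)"
  by (rule ext) (simp add: grd_def image_image)

lemma inf_grd_le_iff:
  fixes phi :: "'m \<Rightarrow> 'o::complete_lattice"
  shows "inf phi (grd c True) \<le> A \<and> inf phi (grd c False) \<le> B
           \<longleftrightarrow> phi \<le> (\<lambda>rho. if c rho then A rho else B rho)"
  unfolding le_fun_def grd_def by (auto split: if_splits)

theorem mainTheorem3:
  fixes etaM :: "('x,'v) mem \<Rightarrow> 'tm" and etaO :: "'o::complete_lattice \<Rightarrow> 'to"
    and bMM :: "(('x,'v) mem \<Rightarrow> 'tm) \<Rightarrow> 'tm \<Rightarrow> 'tm"
    and bMO :: "(('x,'v) mem \<Rightarrow> 'to) \<Rightarrow> 'tm \<Rightarrow> 'to"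
    and bOM :: "('o \<Rightarrow> 'tm) \<Rightarrow> 'to \<Rightarrow> 'tm"
    and bOO :: "('o \<Rightarrow> 'to) \<Rightarrow> 'to \<Rightarrow> 'to"
    and leM :: "'tm \<Rightarrow> 'tm \<Rightarrow> bool" and botM :: 'tm
    and leO :: "'to \<Rightarrow> 'to \<Rightarrow> bool" and botO :: 'to
    and alg :: "'to \<Rightarrow> 'o"
    and asg :: "'x \<Rightarrow> 'e \<Rightarrow> ('x,'v) mem \<Rightarrow> 'tm"
    and cnd :: "'c \<Rightarrow> ('x,'v) mem \<Rightarrow> bool"
    and P :: "('x, 'e, 'c) prog" and b :: 'c
  assumes "while_monad etaM etaO bMM bMO bOM bOO leM botM leO botO"
    and "em_algebra etaO bMO bOO alg"
    and "meet_preserving etaO bMO bOO alg"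
  defines "Phi \<equiv> PhiW etaM bMM (cnd b) (sem etaM bMM leM asg cnd P)"
    and "Psi \<equiv> (\<lambda>g phi. sup (g (sp etaO bMO alg (sem etaM bMM leM asg cnd P)
                                  (inf phi (grd (cnd b) True))))
                           (inf phi (grd (cnd b) False)))"
  shows "(\<forall>g. join_preserving g \<longrightarrow> join_preserving (Psi g)) \<and>
         (\<forall>f. Psi (sp etaO bMO alg f) = sp etaO bMO alg (Phi f))"
proof -
  have meet: "meet_pres_at alg (Tmap etaO bMO)"
    using assms(3) unfolding meet_preserving_def by blast
  have "join_preserving (Psi g)" if "join_preserving g" for g
  proof -
    have g_Sup: "g (Sup T) = Sup (g ` T)" for T
      using that unfolding join_preserving_def ..
    have "Psi g (Sup S) = Sup (Psi g ` S)" for S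
      unfolding Psi_def inf_grd_Sup sp_Sup[OF meet] g_Sup image_image
      by (rule Complete_Lattices.SUP_sup_distrib)
    then show ?thesis
      unfolding join_preserving_def ..
  qed
  moreover have "Psi (sp etaO bMO alg f) = sp etaO bMO alg (Phi f)" for f
  proof (rule sp_eqI[OF meet, symmetric])
    show "Psi (sp etaO bMO alg f) phi \<le> psi \<longleftrightarrow> phi \<le> wp etaO bMO alg (Phi f) psi" for phi psi
      unfolding Psi_def Phi_def wp_PhiW[OF assms(1,2)] sp_le_iff[OF meet] sup.bounded_iff
      by (rule inf_grd_le_iff)
  qed
  ultimately show ?thesis
    by blast
qed

end
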